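(* Let $\Lambda$ be a finite-dimensional algebra over an algebraically closed field $k$ and let $M_1,M_2$ be finitely generated $\Lambda$-modules. Suppose there is $0\neq\beta\in\mathrm{Hom}_\Lambda(M_2,M_1)$ such that $\alpha\beta=0$ for every $\alpha\in\mathrm{Hom}_\Lambda(M_1,M_2)$. Then $\mathrm{End}_\Lambda(M_1\oplus M_2)$ is not a symmetric algebra.
   Context: An algebra $A$ is symmetric if there is a linear form $\lambda:A\to k$ with $\lambda(ab)=\lambda(ba)$ for all $a,b$ whose kernel contains no nonzero left ideal. *)

theory Defs
  imports "HOL-Computational_Algebra.Polynomial" "HOL-Library.Product_Plus"
begin

definition alg_closed_field :: "'k::field itself \<Rightarrow> bool" where
  "alg_closed_field _ \<longleftrightarrow> (\<forall>p::'k poly. degree p > 0 \<longrightarrow> (\<exists>x. poly p x = 0))"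

definition fd_algebra :: "('k::field \<Rightarrow> 'l::ring_1 \<Rightarrow> 'l) \<Rightarrow> bool" where
  "fd_algebra sc \<longleftrightarrow>
     (\<forall>a x y. sc a (x + y) = sc a x + sc a y) \<and>
     (\<forall>a b x. sc (a + b) x = sc a x + sc b x) \<and>
     (\<forall>a b x. sc a (sc b x) = sc (a * b) x) \<and>
     (\<forall>x. sc 1 x = x) \<and>
     (\<forall>a x y. sc a (x * y) = (sc a x) * y \<and> sc a (x * y) = x * (sc a y)) \<and>
     (\<exists>B. finite B \<and> (\<forall>x. \<exists>c. x = (\<Sum>b\<in>B. sc (c b) b)))"

definition lmodule :: "('l::ring_1 \<Rightarrow> 'm::ab_group_add \<Rightarrow> 'm) \<Rightarrow> bool" where
  "lmodule act \<longleftrightarrow>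
     (\<forall>a x y. act a (x + y) = act a x + act a y) \<and>
     (\<forall>a b x. act (a + b) x = act a x + act b x) \<and>
     (\<forall>a b x. act (a * b) x = act a (act b x)) \<and>
     (\<forall>x. act 1 x = x)"

definition fg_module :: "('l::ring_1 \<Rightarrow> 'm::ab_group_add \<Rightarrow> 'm) \<Rightarrow> bool" where
  "fg_module act \<longleftrightarrow> lmodule act \<and>
     (\<exists>S. finite S \<and> (\<forall>x. \<exists>c. x = (\<Sum>s\<in>S. act (c s) s)))"

definition module_hom :: "('l::ring_1 \<Rightarrow> 'm::ab_group_add \<Rightarrow> 'm) \<Rightarrow> ('l \<Rightarrow> 'n::ab_group_add \<Rightarrow> 'n)
    \<Rightarrow> ('m \<Rightarrow> 'n) set" where
  "module_hom actM actN = {f. (\<forall>x y. f (x + y) = f x + f y) \<and> (\<forall>a x. f (actM a x) = actN a (f x))}"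

definition dsum_act :: "('l \<Rightarrow> 'm1 \<Rightarrow> 'm1) \<Rightarrow> ('l \<Rightarrow> 'm2 \<Rightarrow> 'm2) \<Rightarrow> 'l \<Rightarrow> 'm1 \<times> 'm2 \<Rightarrow> 'm1 \<times> 'm2" where
  "dsum_act act1 act2 a z = (act1 a (fst z), act2 a (snd z))"

definition left_ideal :: "'a set \<Rightarrow> ('a \<Rightarrow> 'a \<Rightarrow> 'a) \<Rightarrow> 'a \<Rightarrow> ('k \<Rightarrow> 'a \<Rightarrow> 'a)
    \<Rightarrow> ('a \<Rightarrow> 'a \<Rightarrow> 'a) \<Rightarrow> 'a set \<Rightarrow> bool" where
  "left_ideal A add zero scl mul I \<longleftrightarrow> I \<subseteq> A \<and> zero \<in> I \<and>
     (\<forall>x\<in>I. \<forall>y\<in>I. add x y \<in> I) \<and> (\<forall>c. \<forall>x\<in>I. scl c x \<in> I) \<and>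
     (\<forall>a\<in>A. \<forall>x\<in>I. mul a x \<in> I)"

definition symmetric_alg :: "'a set \<Rightarrow> ('a \<Rightarrow> 'a \<Rightarrow> 'a) \<Rightarrow> 'a \<Rightarrow> ('k::field \<Rightarrow> 'a \<Rightarrow> 'a)
    \<Rightarrow> ('a \<Rightarrow> 'a \<Rightarrow> 'a) \<Rightarrow> bool" where
  "symmetric_alg A add zero scl mul \<longleftrightarrow>
     (\<exists>tr::'a \<Rightarrow> 'k.
        (\<forall>x\<in>A. \<forall>y\<in>A. tr (add x y) = tr x + tr y) \<and>
        (\<forall>c. \<forall>x\<in>A. tr (scl c x) = c * tr x) \<and>
        (\<forall>x\<in>A. \<forall>y\<in>A. tr (mul x y) = tr (mul y x)) \<and>
        (\<forall>I. left_ideal A add zero scl mul I \<and> I \<subseteq> {x\<in>A. tr x = 0} \<longrightarrow> I \<subseteq> {zero}))"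

definition End_dsum_symmetric ::
  "('k::field \<Rightarrow> 'l::ring_1 \<Rightarrow> 'l) \<Rightarrow> ('l \<Rightarrow> 'm1::ab_group_add \<Rightarrow> 'm1) \<Rightarrow> ('l \<Rightarrow> 'm2::ab_group_add \<Rightarrow> 'm2) \<Rightarrow> bool" where
  "End_dsum_symmetric sc act1 act2 \<longleftrightarrow>
     symmetric_alg (module_hom (dsum_act act1 act2) (dsum_act act1 act2))
       (\<lambda>f g z. (fst (f z) + fst (g z), snd (f z) + snd (g z)))
       (\<lambda>z. (0, 0))
       (\<lambda>c f z. dsum_act act1 act2 (sc c 1) (f z))
       (\<lambda>f g. f \<circ> g)"

end

theory Submission
  imports Defs
begin

text \<open>Let \<open>E\<close> be the endomorphism of \<open>M\<^sub>1 \<oplus> M\<^sub>2\<close> with matrix \<open>[[0, \<beta>], [0, 0]]\<close> and \<open>e\<^sub>1\<close>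
  the projection onto \<open>M\<^sub>1\<close>. For every endomorphism \<open>f\<close> the element \<open>x = f E\<close> satisfies
  \<open>e\<^sub>1 x = x\<close>, because the \<open>M\<^sub>2\<close>-component of \<open>f E\<close> is \<open>\<alpha> \<beta> = 0\<close> for some \<open>\<alpha> : M\<^sub>1 \<rightarrow> M\<^sub>2\<close>,
  and \<open>x e\<^sub>1 = 0\<close>. Hence any symmetric form \<open>\<lambda>\<close> gives \<open>\<lambda>(x) = \<lambda>(e\<^sub>1 x) = \<lambda>(x e\<^sub>1) = 0\<close>,
  so the left ideal \<open>End(M\<^sub>1 \<oplus> M\<^sub>2) E\<close>, which is nonzero as \<open>\<beta> \<noteq> 0\<close>, lies in the kernel of
  \<open>\<lambda>\<close>.\<close>

lemma symmetric_form_zero_if_corner: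
  assumes sym: "\<forall>x\<in>A. \<forall>y\<in>A. tr (mul x y) = tr (mul y x)"
    and "x \<in> A" and "e \<in> A" and "mul e x = x" and "mul x e = zero" and "tr zero = 0"
  shows "tr x = 0"
proof -
  have "tr x = tr (mul e x)"
    using \<open>mul e x = x\<close> by simp
  also have "\<dots> = tr (mul x e)"
    using sym \<open>x \<in> A\<close> \<open>e \<in> A\<close> by blast
  also have "\<dots> = 0"
    using \<open>mul x e = zero\<close> \<open>tr zero = 0\<close> by simp
  finally show ?thesis .
qed

lemma lmodule_act_add: "lmodule act \<Longrightarrow> act a (x + y) = act a x + act a y"
  and lmodule_act_mult: "lmodule act \<Longrightarrow> act (a * b) x = act a (act b x)"
  by (simp_all add: lmodule_def)

lemma lmodule_act_zero: "lmodule act \<Longrightarrow> act a 0 = 0"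
  using lmodule_act_add[of act a 0 0] by simp

lemma lmodule_dsum_act: "lmodule act1 \<Longrightarrow> lmodule act2 \<Longrightarrow> lmodule (dsum_act act1 act2)"
  by (simp add: lmodule_def dsum_act_def)

lemma module_hom_zero:
  assumes "f \<in> module_hom actM actN"
  shows "f 0 = 0"
proof -
  have "f (0 + 0) = f 0 + f 0"
    using assms unfolding module_hom_def by blast
  then show ?thesis
    by simp
qed

lemma module_hom_zero_map: "lmodule actN \<Longrightarrow> (\<lambda>x. 0) \<in> module_hom actM actN"
  by (simp add: module_hom_def lmodule_act_zero)

lemma module_hom_id: "id \<in> module_hom act act"
  by (simp add: module_hom_def)

lemma module_hom_comp:
  "f \<in> module_hom actN actP \<Longrightarrow> g \<in> module_hom actM actN \<Longrightarrow> f \<circ> g \<in> module_hom actM actP"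
  by (simp add: module_hom_def)

lemma module_hom_add:
  assumes "lmodule actN" and "f \<in> module_hom actM actN" and "g \<in> module_hom actM actN"
  shows "(\<lambda>x. f x + g x) \<in> module_hom actM actN"
  using assms by (simp add: module_hom_def lmodule_act_add algebra_simps)

lemma module_hom_central_act:
  assumes "lmodule actN" and "f \<in> module_hom actM actN" and "\<And>a. c * a = a * c"
  shows "(\<lambda>x. actN c (f x)) \<in> module_hom actM actN"
  using assms by (simp add: module_hom_def lmodule_act_add flip: lmodule_act_mult)

lemma fd_algebra_scalar_central: "fd_algebra sc \<Longrightarrow> sc c 1 * a = a * sc c 1"
  unfolding fd_algebra_def by (metis mult_1_left mult_1_right)

lemma left_ideal_End_principal:
  assumes "fd_algebra sc" and "lmodule act" and "E \<in> module_hom act act"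
  shows "left_ideal (module_hom act act) (\<lambda>f g x. f x + g x) (\<lambda>x. 0)
           (\<lambda>c f x. act (sc c 1) (f x)) (\<circ>) {f \<circ> E |f. f \<in> module_hom act act}"
  unfolding left_ideal_def
proof (intro conjI ballI allI subsetI)
  let ?End = "module_hom act act"
  show "x \<in> ?End" if "x \<in> {f \<circ> E |f. f \<in> ?End}" for x
    using that assms(3) module_hom_comp by blast
  have "(\<lambda>x. 0) \<in> ?End"
    using module_hom_zero_map assms(2) .
  moreover have "(\<lambda>x. 0) = (\<lambda>x. 0) \<circ> E"
    by (simp add: comp_def)
  ultimately show "(\<lambda>x. 0) \<in> {f \<circ> E |f. f \<in> ?End}"
    by blast
  show "(\<lambda>z. x z + y z) \<in> {f \<circ> E |f. f \<in> ?End}"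
    if x: "x \<in> {f \<circ> E |f. f \<in> ?End}" and y: "y \<in> {f \<circ> E |f. f \<in> ?End}" for x y
  proof -
    obtain f g where "f \<in> ?End" "g \<in> ?End" "x = f \<circ> E" "y = g \<circ> E"
      using x y by blast
    moreover have "(\<lambda>z. f z + g z) \<in> ?End"
      using module_hom_add assms(2) \<open>f \<in> ?End\<close> \<open>g \<in> ?End\<close> by blast
    ultimately show ?thesis
      by (intro CollectI exI[of _ "\<lambda>z. f z + g z"]) auto
  qed
  show "(\<lambda>z. act (sc c 1) (x z)) \<in> {f \<circ> E |f. f \<in> ?End}"
    if x: "x \<in> {f \<circ> E |f. f \<in> ?End}" for c x
  proof -
    obtain f where "f \<in> ?End" "x = f \<circ> E"
      using x by blast
    moreover have "(\<lambda>z. act (sc c 1) (f z)) \<in> ?End"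
      using module_hom_central_act assms(2) \<open>f \<in> ?End\<close> fd_algebra_scalar_central[OF assms(1)]
      by blast
    ultimately show ?thesis
      by (intro CollectI exI[of _ "\<lambda>z. act (sc c 1) (f z)"]) auto
  qed
  show "a \<circ> x \<in> {f \<circ> E |f. f \<in> ?End}"
    if a: "a \<in> ?End" and x: "x \<in> {f \<circ> E |f. f \<in> ?End}" for a x
  proof -
    obtain f where "f \<in> ?End" "x = f \<circ> E"
      using x by blast
    moreover have "a \<circ> f \<in> ?End"
      using module_hom_comp a \<open>f \<in> ?End\<close> by blast
    ultimately show ?thesis
      by (intro CollectI exI[of _ "a \<circ> f"]) (simp add: comp_assoc)
  qed
qed

lemma End_dsum_symmetric_iff:
  "End_dsum_symmetric sc act1 act2 \<longleftrightarrow>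
     symmetric_alg (module_hom (dsum_act act1 act2) (dsum_act act1 act2))
       (\<lambda>f g z. f z + g z) (\<lambda>z. 0) (\<lambda>c f z. dsum_act act1 act2 (sc c 1) (f z)) (\<circ>)"
proof -
  have add: "(\<lambda>f g z. (fst (f z) + fst (g z), snd (f z) + snd (g z))) = (\<lambda>f g z. f z + g z)"
    and zero: "(\<lambda>z. (0, 0)) = (\<lambda>z. 0)"
    by (simp_all add: plus_prod_def zero_prod_def)
  show ?thesis
    unfolding End_dsum_symmetric_def add zero ..
qed

lemma dsum_corner_hom:
  assumes "lmodule act2" and "\<beta> \<in> module_hom act2 act1"
  shows "(\<lambda>z. (\<beta> (snd z), 0)) \<in> module_hom (dsum_act act1 act2) (dsum_act act1 act2)"
  using assms by (simp add: module_hom_def dsum_act_def lmodule_act_zero)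

lemma dsum_proj1_hom:
  "lmodule act2 \<Longrightarrow> (\<lambda>z. (fst z, 0)) \<in> module_hom (dsum_act act1 act2) (dsum_act act1 act2)"
  by (simp add: module_hom_def dsum_act_def lmodule_act_zero)

lemma dsum_component_hom:
  assumes "lmodule act2" and "f \<in> module_hom (dsum_act act1 act2) (dsum_act act1 act2)"
  shows "(\<lambda>x. snd (f (x, 0))) \<in> module_hom act1 act2"
proof -
  have "f ((x, 0) + (y, 0)) = f (x, 0) + f (y, 0)" "f (dsum_act act1 act2 a (x, 0)) =
      dsum_act act1 act2 a (f (x, 0))" for x y a
    using assms(2) unfolding module_hom_def by blast+
  then show ?thesis
    using assms(1) by (simp add: module_hom_def dsum_act_def lmodule_act_zero)
qed

lemma symmetric_form_vanishes_on_corner_ideal: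
  fixes act1 :: "'l::ring_1 \<Rightarrow> 'm1::ab_group_add \<Rightarrow> 'm1"
    and act2 :: "'l \<Rightarrow> 'm2::ab_group_add \<Rightarrow> 'm2"
    and tr :: "('m1 \<times> 'm2 \<Rightarrow> 'm1 \<times> 'm2) \<Rightarrow> 'k::ab_group_add"
  defines "End \<equiv> module_hom (dsum_act act1 act2) (dsum_act act1 act2)"
  assumes mod1: "lmodule act1" and mod2: "lmodule act2"
    and \<beta>: "\<beta> \<in> module_hom act2 act1"
    and annihilated: "\<forall>\<alpha> \<in> module_hom act1 act2. \<alpha> \<circ> \<beta> = (\<lambda>_. 0)"
    and additive: "\<forall>x\<in>End. \<forall>y\<in>End. tr (\<lambda>z. x z + y z) = tr x + tr y"
    and sym: "\<forall>x\<in>End. \<forall>y\<in>End. tr (x \<circ> y) = tr (y \<circ> x)"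
  shows "{f \<circ> (\<lambda>z. (\<beta> (snd z), 0)) |f. f \<in> End} \<subseteq> {x \<in> End. tr x = 0}"
proof
  fix x :: "'m1 \<times> 'm2 \<Rightarrow> 'm1 \<times> 'm2"
  assume "x \<in> {f \<circ> (\<lambda>z. (\<beta> (snd z), 0)) |f. f \<in> End}"
  then obtain f where f: "f \<in> End" and x: "x = f \<circ> (\<lambda>z. (\<beta> (snd z), 0))"
    by blast
  define e1 :: "'m1 \<times> 'm2 \<Rightarrow> 'm1 \<times> 'm2" where "e1 = (\<lambda>z. (fst z, 0))"
  have "(\<lambda>z. 0) \<in> End"
    unfolding End_def using module_hom_zero_map lmodule_dsum_act mod1 mod2 by blast
  with additive have tr_zero: "tr (\<lambda>z. 0) = 0"
    by fastforce
  have x_End: "x \<in> End"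
    unfolding x using module_hom_comp f dsum_corner_hom[OF mod2 \<beta>] by (simp add: End_def)
  have e1: "e1 \<in> End"
    unfolding e1_def End_def using dsum_proj1_hom mod2 .
  have f_hom: "f \<in> module_hom (dsum_act act1 act2) (dsum_act act1 act2)"
    using f unfolding End_def .
  have corner: "e1 \<circ> x = x" "x \<circ> e1 = (\<lambda>z. 0)"
    using annihilated dsum_component_hom[OF mod2 f_hom] module_hom_zero[OF f_hom] module_hom_zero[OF \<beta>]
    by (auto simp: x e1_def fun_eq_iff prod_eq_iff zero_prod_def)
  have "tr x = 0"
    using symmetric_form_zero_if_corner[where mul = "(\<circ>)", OF sym x_End e1 corner tr_zero] .
  with x_End show "x \<in> {x \<in> End. tr x = 0}"
    by blast
qed

theorem lemma4p1:
  fixes sc :: "'k::field \<Rightarrow> 'l::ring_1 \<Rightarrow> 'l"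
    and act1 :: "'l \<Rightarrow> 'm1::ab_group_add \<Rightarrow> 'm1"
    and act2 :: "'l \<Rightarrow> 'm2::ab_group_add \<Rightarrow> 'm2"
    and \<beta> :: "'m2 \<Rightarrow> 'm1"
  assumes "alg_closed_field TYPE('k)"
    and "fd_algebra sc"
    and "fg_module act1"
    and "fg_module act2"
    and "\<beta> \<in> module_hom act2 act1"
    and "\<beta> \<noteq> (\<lambda>_. 0)"
    and "\<forall>\<alpha> \<in> module_hom act1 act2. \<alpha> \<circ> \<beta> = (\<lambda>_. 0)"
  shows "\<not> End_dsum_symmetric sc act1 act2"
proof
  let ?End = "module_hom (dsum_act act1 act2) (dsum_act act1 act2)"
  define E :: "'m1 \<times> 'm2 \<Rightarrow> 'm1 \<times> 'm2" where "E = (\<lambda>z. (\<beta> (snd z), 0))"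
  let ?I = "{f \<circ> E |f. f \<in> ?End}"
  have mod1: "lmodule act1" and mod2: "lmodule act2"
    using assms(3,4) by (simp_all add: fg_module_def)
  assume "End_dsum_symmetric sc act1 act2"
  then obtain tr :: "_ \<Rightarrow> 'k" where
    additive: "\<forall>x\<in>?End. \<forall>y\<in>?End. tr (\<lambda>z. x z + y z) = tr x + tr y"
    and "\<forall>c. \<forall>x\<in>?End. tr (\<lambda>z. dsum_act act1 act2 (sc c 1) (x z)) = c * tr x"
    and sym: "\<forall>x\<in>?End. \<forall>y\<in>?End. tr (x \<circ> y) = tr (y \<circ> x)"
    and kernel: "\<forall>I. left_ideal ?End (\<lambda>f g z. f z + g z) (\<lambda>z. 0)
      (\<lambda>c f z. dsum_act act1 act2 (sc c 1) (f z)) (\<circ>) I \<and> I \<subseteq> {x \<in> ?End. tr x = 0} \<longrightarrow>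
      I \<subseteq> {\<lambda>z. 0}"
    unfolding End_dsum_symmetric_iff symmetric_alg_def by (elim exE conjE) (rule that)
  have E_End: "E \<in> ?End"
    unfolding E_def using dsum_corner_hom mod2 assms(5) .
  then have "left_ideal ?End (\<lambda>f g z. f z + g z) (\<lambda>z. 0)
      (\<lambda>c f z. dsum_act act1 act2 (sc c 1) (f z)) (\<circ>) ?I"
    using left_ideal_End_principal assms(2) lmodule_dsum_act mod1 mod2 by blast
  moreover have "?I \<subseteq> {x \<in> ?End. tr x = 0}"
    unfolding E_def by (rule symmetric_form_vanishes_on_corner_ideal[OF mod1 mod2 assms(5,7) additive sym])
  ultimately have "?I \<subseteq> {\<lambda>z. 0}"
    using kernel by blast
  moreover have "E = id \<circ> E"
    by simp
  with module_hom_id have "E \<in> ?I"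
    by blast
  ultimately have "E = (\<lambda>z. 0)"
    by blast
  with assms(6) show False
    by (auto simp: E_def fun_eq_iff zero_prod_def)
qed

end
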